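(* Let $\mathbf{A}\in\mathbb{R}^{(\ell m)\times(qn)}$ be a block matrix with $\ell\times q$ blocks of size $m\times n$, with distinct nonzero blocks $\mathbf{A}_1,\dots,\mathbf{A}_p$, multiplicities $\eta_k$ and location-tally matrices $\mathbf{E}_1,\dots,\mathbf{E}_p\in\mathbb{R}^{\ell\times q}$. Let $\mathbf{B}=\mathbf{S}_{\ell,m}\mathbf{A}\mathbf{S}_{q,n}^\top$ and let $\mathscr{B}\subseteq\mathbb{R}^{\ell\times q}$ be the span of the blocks of $\mathbf{B}$. Define $\mathtt{mat}_{\mathscr{E}}:\mathbb{R}^p\to\mathbb{R}^{\ell\times q}$ by $\mathtt{mat}_{\mathscr{E}}(\mathbf{v})=\sum_{k=1}^p v_k\mathbf{E}_k$, and define $\mathtt{vec}_{\mathscr{E}}$ on $\mathrm{span}\{\mathbf{E}_1,\dots,\mathbf{E}_p\}$ by $\mathtt{vec}_{\mathscr{E}}\bigl(\sum_k c_k\mathbf{E}_k\bigr)=(c_1,\dots,c_p)^\top$. Let $\mathbf{A}_{(2)}\in\mathbb{R}^{p\times mn}$ be the matrix whose $k$th row is $\mathrm{vec}(\sqrt{\eta_k}\mathbf{A}_k)^\top$. Then $\mathscr{B}\subseteq\mathrm{span}\{\mathbf{E}_k\}$, and $\mathtt{vec}_{\mathscr{E}}$ restricted to $\mathscr{B}$ is a linear bijection from $\mathscr{B}$ onto the column space of $\mathbf{A}_{(2)}$, with inverse the restriction of $\mathtt{mat}_{\mathscr{E}}$. In particular $\mathscr{B}$ is isomorphic to $\ma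thrm{colspace}(\mathbf{A}_{(2)})$.
   Context: Blocks of $\mathbf{A}$: $\mathbf{A}^{(\gamma,\delta)}_{\alpha\beta}=\mathbf{A}_{(\gamma-1)m+\alpha,(\delta-1)n+\beta}$, $(\gamma,\delta)\in[\ell]\times[q]$. $\eta_k$ is the number of block positions with $\mathbf{A}^{(\gamma,\delta)}=\mathbf{A}_k$, and $[\mathbf{E}_k]_{\gamma\delta}=1/\sqrt{\eta_k}$ if $\mathbf{A}^{(\gamma,\delta)}=\mathbf{A}_k$, else $0$ (the $\mathbf{E}_k$ have disjoint supports, hence are linearly independent). For $a,b\ge1$, $s=ab$, $\mathbf{S}_{a,b}\in\mathbb{R}^{s\times s}$ is the permutation matrix whose row $(i-1)a+j$ is $\mathbf{e}_{(j-1)b+i}^\top$ ($i\in[b]$, $j\in[a]$). $\mathbf{B}\in\mathbb{R}^{(m\ell)\times(nq)}$ is viewed as an $m\times n$ grid of $\ell\times q$ blocks $\mathbf{B}^{(\alpha,\beta)}$ with $\mathbf{B}^{(\alpha,\beta)}_{\gamma\delta}=\mathbf{B}_{(\alpha-1)\ell+\gamma,(\beta-1)q+\delta}$. $\mathbf{A}_{(2)}$ is the mode-2 unfolding of the tensor $\mathcal{A}\in\mathbb{R}^{m\times p\times n}$ with $\mathcal{A}_{ikj}=\sqrt{\eta_k}[\mathbf{A}_k]_{ij}$. *)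

theory Defs
  imports "Jordan_Normal_Form.VS_Connect"
begin

text \<open>All indices are 0-based.  Matrices are Jordan_Normal_Form matrices over real.\<close>

definition blk :: "nat \<Rightarrow> nat \<Rightarrow> real mat \<Rightarrow> nat \<Rightarrow> nat \<Rightarrow> real mat" where
  "blk m n A \<gamma> \<delta> = mat m n (\<lambda>(\<alpha>,\<beta>). A $$ (\<gamma>*m+\<alpha>, \<delta>*n+\<beta>))"

definition eta :: "nat \<Rightarrow> nat \<Rightarrow> nat \<Rightarrow> nat \<Rightarrow> real mat \<Rightarrow> real mat list \<Rightarrow> nat \<Rightarrow> nat" where
  "eta l q m n A As k = card {(\<gamma>,\<delta>). \<gamma> < l \<and> \<delta> < q \<and> blk m n A \<gamma> \<delta> = As ! k}"

definition Emat :: "nat \<Rightarrow> nat \<Rightarrow> nat \<Rightarrow> nat \<Rightarrow> real mat \<Rightarrow> real mat list \<Rightarrow> nat \<Rightarrow> real mat" where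
  "Emat l q m n A As k = mat l q (\<lambda>(\<gamma>,\<delta>).
      if blk m n A \<gamma> \<delta> = As ! k then 1 / sqrt (real (eta l q m n A As k)) else 0)"

text \<open>Permutation matrix S_{a,b}: (1-based) row (i-1)a+j is e_{(j-1)b+i}; 0-based row r = i*a+j
  (i<b, j<a) has its 1 in column j*b+i, where i = r div a, j = r mod a.\<close>
definition Sperm :: "nat \<Rightarrow> nat \<Rightarrow> real mat" where
  "Sperm a b = mat (a*b) (a*b) (\<lambda>(r,c). if c = (r mod a) * b + r div a then 1 else 0)"

definition Bmat :: "nat \<Rightarrow> nat \<Rightarrow> nat \<Rightarrow> nat \<Rightarrow> real mat \<Rightarrow> real mat" where
  "Bmat l q m n A = Sperm l m * A * transpose_mat (Sperm q n)"

definition Bblk :: "nat \<Rightarrow> nat \<Rightarrow> real mat \<Rightarrow> nat \<Rightarrow> nat \<Rightarrow> real mat" where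
  "Bblk l q B \<alpha> \<beta> = mat l q (\<lambda>(\<gamma>,\<delta>). B $$ (\<alpha>*l+\<gamma>, \<beta>*q+\<delta>))"

definition mspan :: "nat \<Rightarrow> nat \<Rightarrow> real mat set \<Rightarrow> real mat set" where
  "mspan l q S = LinearCombinations.module.span class_ring (module_mat TYPE(real) l q) S"

definition Bspace :: "nat \<Rightarrow> nat \<Rightarrow> nat \<Rightarrow> nat \<Rightarrow> real mat \<Rightarrow> real mat set" where
  "Bspace l q m n A = mspan l q {Bblk l q (Bmat l q m n A) \<alpha> \<beta> | \<alpha> \<beta>. \<alpha> < m \<and> \<beta> < n}"

definition matE :: "nat \<Rightarrow> nat \<Rightarrow> nat \<Rightarrow> nat \<Rightarrow> real mat \<Rightarrow> real mat list \<Rightarrow> real vec \<Rightarrow> real mat" where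
  "matE l q m n A As v = mat l q (\<lambda>(i,j). \<Sum>k<length As. v $ k * Emat l q m n A As k $$ (i,j))"

text \<open>vec_E: the coefficient vector of a matrix in span{E_k} (well defined there since the E_k
  are linearly independent).\<close>
definition vecE :: "nat \<Rightarrow> nat \<Rightarrow> nat \<Rightarrow> nat \<Rightarrow> real mat \<Rightarrow> real mat list \<Rightarrow> real mat \<Rightarrow> real vec" where
  "vecE l q m n A As X = (THE c. c \<in> carrier_vec (length As) \<and> matE l q m n A As c = X)"

text \<open>A_(2): p x mn, k-th row = vec(sqrt(eta_k) A_k)^T, vec = column stacking:
  vec(M) at index beta*m+alpha is M(alpha,beta).\<close>
definition A2 :: "nat \<Rightarrow> nat \<Rightarrow> nat \<Rightarrow> nat \<Rightarrow> real mat \<Rightarrow> real mat list \<Rightarrow> real mat" where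
  "A2 l q m n A As = mat (length As) (m*n)
     (\<lambda>(k,r). sqrt (real (eta l q m n A As k)) * (As ! k) $$ (r mod m, r div m))"

definition colspace :: "real mat \<Rightarrow> real vec set" where
  "colspace M = vec_space.col_space (dim_row M) M"

end

(*
  The perfect shuffles S_{l,m} and S_{q,n} exchange the two levels of block indexing: entry
  (gamma, delta) of block (alpha, beta) of B is entry (alpha, beta) of block (gamma, delta) of A.
  Column (alpha, beta) of A_(2) lists the (alpha, beta) entries of the distinct blocks A_k, scaled
  by sqrt eta_k, and mat_E undoes the scaling and spreads each entry over the positions of its
  block; so mat_E maps that column to block (alpha, beta) of B.  Since the E_k have disjoint
  nonempty supports, mat_E is an injective linear map with left inverse vec_E, and since a linear
  map sends the span of a set onto the span of its image, mat_E maps colspace A_(2) onto the span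
  of the blocks of B, with vec_E as inverse isomorphism.
*)
theory Submission
  imports Defs
begin

lemma mult_add_less_mult:
  fixes a b x y :: nat
  assumes "a < x" "b < y"
  shows "a * y + b < x * y"
proof -
  have "a * y + b < Suc a * y" using assms(2) by simp
  also have "\<dots> \<le> x * y" using assms(1) by (intro mult_le_mono1) simp
  finally show ?thesis .
qed

lemma lessThan_mult_eq:
  fixes m n :: nat
  shows "{..<m * n} = (\<lambda>(\<alpha>, \<beta>). \<beta> * m + \<alpha>) ` ({..<m} \<times> {..<n})"
proof
  show "{..<m * n} \<subseteq> (\<lambda>(\<alpha>, \<beta>). \<beta> * m + \<alpha>) ` ({..<m} \<times> {..<n})"
  proof
    fix j assume "j \<in> {..<m * n}"
    then have j: "j < m * n" by simp
    then have "0 < m" by (cases m) auto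
    then have "j mod m < m" by simp
    moreover have "j div m < n" using j by (simp add: less_mult_imp_div_less mult.commute)
    ultimately have "(j mod m, j div m) \<in> {..<m} \<times> {..<n}" by simp
    moreover have "j = (\<lambda>(\<alpha>, \<beta>). \<beta> * m + \<alpha>) (j mod m, j div m)" by simp
    ultimately show "j \<in> (\<lambda>(\<alpha>, \<beta>). \<beta> * m + \<alpha>) ` ({..<m} \<times> {..<n})"
      by (rule rev_image_eqI)
  qed
  show "(\<lambda>(\<alpha>, \<beta>). \<beta> * m + \<alpha>) ` ({..<m} \<times> {..<n}) \<subseteq> {..<m * n}"
    using mult_add_less_mult[of _ n _ m] by (auto simp: mult.commute[of m n])
qed

context mod_hom
begin

lemma image_submodule:
  assumes "submodule R U M"
  shows "submodule R (f ` U) N"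
proof -
  interpret U: submodule R U M by (fact assms)
  show ?thesis
  proof
    show "f ` U \<subseteq> carrier N" using U.subset by auto
    show "\<zero>\<^bsub>N\<^esub> \<in> f ` U" using f0_is_0[symmetric] U.zero_closed by (rule image_eqI)
    show "v \<oplus>\<^bsub>N\<^esub> w \<in> f ` U" if "v \<in> f ` U" "w \<in> f ` U" for v w
      using that
    proof (elim imageE)
      fix x y assume v: "v = f x" and x: "x \<in> U" and w: "w = f y" and y: "y \<in> U"
      have "v \<oplus>\<^bsub>N\<^esub> w = f (x \<oplus>\<^bsub>M\<^esub> y)"
        unfolding v w using subsetD[OF U.subset x] subsetD[OF U.subset y] by simp
      moreover have "x \<oplus>\<^bsub>M\<^esub> y \<in> U" using x y by (rule U.m_closed)
      ultimately show "v \<oplus>\<^bsub>N\<^esub> w \<in> f ` U" by (rule image_eqI)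
    qed
    show "c \<odot>\<^bsub>N\<^esub> v \<in> f ` U" if c: "c \<in> carrier R" and "v \<in> f ` U" for c v
      using that(2)
    proof (elim imageE)
      fix x assume v: "v = f x" and x: "x \<in> U"
      have "c \<odot>\<^bsub>N\<^esub> v = f (c \<odot>\<^bsub>M\<^esub> x)"
        unfolding v using c subsetD[OF U.subset x] by simp
      moreover have "c \<odot>\<^bsub>M\<^esub> x \<in> U" using c x by (rule U.smult_closed)
      ultimately show "c \<odot>\<^bsub>N\<^esub> v \<in> f ` U" by (rule image_eqI)
    qed
  qed
qed

lemma vimage_submodule:
  assumes "submodule R U N"
  shows "submodule R {v \<in> carrier M. f v \<in> U} M"
proof -
  interpret U: submodule R U N by (fact assms)
  show ?thesis
  proof
    show "\<zero>\<^bsub>M\<^esub> \<in> {v \<in> carrier M. f v \<in> U}" by simp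
    show "v \<oplus>\<^bsub>M\<^esub> w \<in> {v \<in> carrier M. f v \<in> U}"
      if "v \<in> {v \<in> carrier M. f v \<in> U}" "w \<in> {v \<in> carrier M. f v \<in> U}" for v w
      using that by simp
    show "c \<odot>\<^bsub>M\<^esub> v \<in> {v \<in> carrier M. f v \<in> U}"
      if "c \<in> carrier R" "v \<in> {v \<in> carrier M. f v \<in> U}" for c v
      using that by simp
  qed (auto intro: M.module_axioms)
qed

lemma image_span:
  assumes S: "S \<subseteq> carrier M"
  shows "f ` M.span S = N.span (f ` S)"
proof
  have fS: "f ` S \<subseteq> carrier N" using S by auto
  then have "S \<subseteq> {v \<in> carrier M. f v \<in> N.span (f ` S)}"
    using S N.in_own_span[OF fS] by blast
  then have "M.span S \<subseteq> {v \<in> carrier M. f v \<in> N.span (f ` S)}"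
    by (rule M.span_is_subset[OF _ vimage_submodule[OF N.span_is_submodule[OF fS]]])
  then show "f ` M.span S \<subseteq> N.span (f ` S)" by blast
  show "N.span (f ` S) \<subseteq> f ` M.span S"
    by (rule N.span_is_subset[OF image_mono[OF M.in_own_span[OF S]]
          image_submodule[OF M.span_is_submodule[OF S]]])
qed

lemma left_inverse_module_hom:
  assumes inv: "\<And>v. v \<in> carrier M \<Longrightarrow> g (f v) = v" and U: "submodule R U M"
  shows "g \<in> LinearCombinations.module_hom R (N\<lparr>carrier := f ` U\<rparr>) (M\<lparr>carrier := U\<rparr>)"
proof -
  interpret U: submodule R U M by (fact U)
  show ?thesis
    unfolding LinearCombinations.module_hom_def
  proof (intro CollectI conjI allI impI)
    show "g \<in> carrier (N\<lparr>carrier := f ` U\<rparr>) \<rightarrow> carrier (M\<lparr>carrier := U\<rparr>)"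
      using U.subset inv by auto
    show "g (v \<oplus>\<^bsub>N\<lparr>carrier := f ` U\<rparr>\<^esub> w) = g v \<oplus>\<^bsub>M\<lparr>carrier := U\<rparr>\<^esub> g w"
      if "v \<in> carrier (N\<lparr>carrier := f ` U\<rparr>) \<and> w \<in> carrier (N\<lparr>carrier := f ` U\<rparr>)" for v w
    proof -
      from that have "v \<in> f ` U" "w \<in> f ` U" by simp_all
      then obtain x y where "x \<in> U" "y \<in> U" "v = f x" "w = f y" by blast
      then show ?thesis using U.subset by (simp add: subsetD inv flip: f_add)
    qed
    show "g (c \<odot>\<^bsub>N\<lparr>carrier := f ` U\<rparr>\<^esub> v) = c \<odot>\<^bsub>M\<lparr>carrier := U\<rparr>\<^esub> g v"
      if "c \<in> carrier R \<and> v \<in> carrier (N\<lparr>carrier := f ` U\<rparr>)" for c v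
    proof -
      from that have "v \<in> f ` U" by simp
      then obtain x where "x \<in> U" "v = f x" by blast
      then show ?thesis using that U.subset by (simp add: subsetD inv flip: f_smult)
    qed
  qed
qed

end

lemma (in linear_map) left_inverse_linear_map:
  assumes inv: "\<And>v. v \<in> carrier V \<Longrightarrow> g (T v) = v" and U: "subspace K U V"
  shows "linear_map K (W.vs (T ` U)) (V.vs U) g"
proof -
  have "submodule K U V" using U by (simp add: subspace_def)
  then have "subspace K (T ` U) W"
    using image_submodule W.vectorspace_axioms by (simp add: subspace_def)
  then interpret image: vectorspace K "W.vs (T ` U)" by (rule W.subspace_is_vs)
  interpret source: vectorspace K "V.vs U" using U by (rule V.subspace_is_vs)
  show ?thesis
    by (intro linear_map.intro mod_hom.intro mod_hom_axioms.intro image.vectorspace_axioms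
        source.vectorspace_axioms image.module_axioms source.module_axioms
        left_inverse_module_hom inv \<open>submodule K U V\<close>)
qed

lemma colspace_subspace: "subspace class_ring (colspace M) (module_vec TYPE(real) (dim_row M))"
proof -
  interpret V: vec_space "TYPE(real)" "dim_row M" .
  show ?thesis unfolding colspace_def V.col_space_def by (rule V.span_is_subspace) simp
qed

lemma Sperm_index_less:
  fixes a b r :: nat
  assumes "r < a * b"
  shows "(r mod a) * b + r div a < a * b"
proof -
  have "a > 0" using assms by (cases a) auto
  moreover have "r div a < b" using assms by (simp add: less_mult_imp_div_less mult.commute)
  ultimately show ?thesis by (simp add: mult_add_less_mult)
qed

lemma Sperm_mult_entry:
  assumes "M \<in> carrier_mat (a * b) nc" "r < a * b" "c < nc"
  shows "(Sperm a b * M) $$ (r, c) = M $$ ((r mod a) * b + r div a, c)"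
  using assms Sperm_index_less[OF assms(2)]
  by (simp add: Sperm_def scalar_prod_def if_distrib if_distribR sum.delta cong: if_cong)

lemma mult_transpose_Sperm_entry:
  assumes "M \<in> carrier_mat nr (a * b)" "r < nr" "c < a * b"
  shows "(M * transpose_mat (Sperm a b)) $$ (r, c) = M $$ (r, (c mod a) * b + c div a)"
  using assms Sperm_index_less[OF assms(3)]
  by (simp add: Sperm_def scalar_prod_def if_distrib if_distribR sum.delta' cong: if_cong)

lemma Bblk_Bmat_entry:
  assumes A: "A \<in> carrier_mat (l * m) (q * n)"
    and "\<alpha> < m" "\<beta> < n" "\<gamma> < l" "\<delta> < q"
  shows "Bblk l q (Bmat l q m n A) \<alpha> \<beta> $$ (\<gamma>, \<delta>) = blk m n A \<gamma> \<delta> $$ (\<alpha>, \<beta>)"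
proof -
  have row: "\<alpha> * l + \<gamma> < l * m" and col: "\<beta> * q + \<delta> < q * n"
    using assms mult_add_less_mult[of \<alpha> m \<gamma> l] mult_add_less_mult[of \<beta> n \<delta> q]
    by (simp_all add: mult.commute)
  have "\<delta> * n + \<beta> < q * n" using assms by (simp add: mult_add_less_mult)
  moreover have "Sperm l m * A \<in> carrier_mat (l * m) (q * n)"
    by (rule mult_carrier_mat[OF _ A]) (simp add: Sperm_def)
  ultimately have "Bmat l q m n A $$ (\<alpha> * l + \<gamma>, \<beta> * q + \<delta>) = A $$ (\<gamma> * m + \<alpha>, \<delta> * n + \<beta>)"
    using assms row col by (simp add: Bmat_def mult_transpose_Sperm_entry Sperm_mult_entry)
  then show ?thesis using assms by (simp add: Bblk_def blk_def)
qed

lemma col_A2_entry: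
  assumes "k < length As" "\<alpha> < m" "\<beta> < n"
  shows "col (A2 l q m n A As) (\<beta> * m + \<alpha>) $ k = sqrt (real (eta l q m n A As k)) * As ! k $$ (\<alpha>, \<beta>)"
proof -
  have "\<beta> * m + \<alpha> < m * n" using assms mult_add_less_mult[of \<beta> n \<alpha> m] by (simp add: mult.commute)
  then show ?thesis using assms by (simp add: A2_def)
qed

lemma matE_add:
  assumes "u \<in> carrier_vec (length As)" "v \<in> carrier_vec (length As)"
  shows "matE l q m n A As (u + v) = matE l q m n A As u + matE l q m n A As v"
  using assms by (intro eq_matI) (auto simp: matE_def sum.distrib algebra_simps)

lemma matE_smult:
  assumes "v \<in> carrier_vec (length As)"
  shows "matE l q m n A As (c \<cdot>\<^sub>v v) = c \<cdot>\<^sub>m matE l q m n A As v"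
  using assms by (intro eq_matI) (auto simp: matE_def sum_distrib_left algebra_simps)

lemma matE_linear_map:
  "linear_map class_ring (module_vec TYPE(real) (length As)) (module_mat TYPE(real) l q)
     (matE l q m n A As)"
proof -
  have "matE l q m n A As v \<in> carrier_mat l q" for v by (simp add: matE_def)
  then have "matE l q m n A As \<in> LinearCombinations.module_hom class_ring
      (module_vec TYPE(real) (length As)) (module_mat TYPE(real) l q)"
    by (auto simp: LinearCombinations.module_hom_def module_vec_simps module_mat_simps
        matE_add matE_smult)
  then show ?thesis
    using vec_vs matrix_vs
    by (intro linear_map.intro mod_hom.intro mod_hom_axioms.intro) (auto simp: vectorspace_def)
qed

lemma matE_unit_vec:
  assumes "k < length As"
  shows "matE l q m n A As (unit_vec (length As) k) = Emat l q m n A As k"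
proof -
  have "Emat l q m n A As k \<in> carrier_mat l q" by (simp add: Emat_def)
  then show ?thesis
    using assms by (intro eq_matI) (auto simp: matE_def if_distrib if_distribR cong: if_cong)
qed

lemma matE_image_carrier_vec:
  "matE l q m n A As ` carrier_vec (length As) = mspan l q (Emat l q m n A As ` {..<length As})"
proof -
  interpret V: vec_space "TYPE(real)" "length As" .
  interpret matE: linear_map class_ring "module_vec TYPE(real) (length As)"
      "module_mat TYPE(real) l q" "matE l q m n A As"
    by (rule matE_linear_map)
  have units: "set (unit_vecs (length As)) = unit_vec (length As) ` {..<length As}"
    by (auto simp: unit_vecs_def)
  have "matE l q m n A As ` carrier_vec (length As)
      = matE l q m n A As ` V.span (set (unit_vecs (length As)))"
    by (simp add: V.span_unit_vecs_is_carrier)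
  also have "\<dots> = mspan l q (matE l q m n A As ` set (unit_vecs (length As)))"
    unfolding mspan_def by (rule matE.image_span) (auto simp: unit_vecs_def)
  also have "matE l q m n A As ` set (unit_vecs (length As)) = Emat l q m n A As ` {..<length As}"
    unfolding units image_image by (rule image_cong) (simp_all add: matE_unit_vec)
  finally show ?thesis .
qed

lemma matE_entry_zero:
  assumes "\<gamma> < l" "\<delta> < q" "blk m n A \<gamma> \<delta> \<notin> set As"
  shows "matE l q m n A As v $$ (\<gamma>, \<delta>) = 0"
  using assms by (auto simp: matE_def Emat_def intro!: sum.neutral)

locale block_matrix =
  fixes l q m n :: nat and A :: "real mat" and As :: "real mat list"
  assumes A_carrier: "A \<in> carrier_mat (l * m) (q * n)"
    and distinct_As: "distinct As"
    and nonzero_blocks: "{blk m n A \<gamma> \<delta> | \<gamma> \<delta>. \<gamma> < l \<and> \<delta> < q} - {0\<^sub>m m n} = set As"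
begin

lemma As_nth_is_block:
  assumes "k < length As"
  obtains \<gamma> \<delta> where "\<gamma> < l" "\<delta> < q" "blk m n A \<gamma> \<delta> = As ! k"
proof -
  have "As ! k \<in> {blk m n A \<gamma> \<delta> | \<gamma> \<delta>. \<gamma> < l \<and> \<delta> < q}"
    using nth_mem[OF assms] unfolding nonzero_blocks[symmetric] by (rule DiffD1)
  then show ?thesis using that by (auto simp del: nth_mem)
qed

lemma eta_pos:
  assumes "k < length As"
  shows "0 < eta l q m n A As k"
proof -
  let ?positions = "{(\<gamma>, \<delta>). \<gamma> < l \<and> \<delta> < q \<and> blk m n A \<gamma> \<delta> = As ! k}"
  obtain \<gamma> \<delta> where "\<gamma> < l" "\<delta> < q" "blk m n A \<gamma> \<delta> = As ! k"
    using assms by (rule As_nth_is_block)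
  then have "(\<gamma>, \<delta>) \<in> ?positions" by simp
  moreover have "finite ?positions"
    by (rule finite_subset[of _ "{..<l} \<times> {..<q}"]) auto
  ultimately show ?thesis unfolding eta_def by (simp add: card_gt_0_iff) blast
qed

lemma matE_entry:
  assumes "\<gamma> < l" "\<delta> < q" "k < length As" "blk m n A \<gamma> \<delta> = As ! k"
  shows "matE l q m n A As v $$ (\<gamma>, \<delta>) = v $ k / sqrt (real (eta l q m n A As k))"
  using assms distinct_As
  by (simp add: matE_def Emat_def nth_eq_iff_index_eq if_distrib cong: if_cong)

lemma inj_on_matE: "inj_on (matE l q m n A As) (carrier_vec (length As))"
proof (rule inj_onI)
  fix u v assume u: "u \<in> carrier_vec (length As)" and v: "v \<in> carrier_vec (length As)"
    and eq: "matE l q m n A As u = matE l q m n A As v"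
  show "u = v"
  proof (rule eq_vecI)
    fix k assume "k < dim_vec v"
    then have k: "k < length As" using v by simp
    obtain \<gamma> \<delta> where block: "\<gamma> < l" "\<delta> < q" "blk m n A \<gamma> \<delta> = As ! k"
      using k by (rule As_nth_is_block)
    have "u $ k / sqrt (real (eta l q m n A As k)) = matE l q m n A As u $$ (\<gamma>, \<delta>)"
      using block k by (simp add: matE_entry)
    also have "\<dots> = v $ k / sqrt (real (eta l q m n A As k))"
      using block k by (simp add: eq matE_entry)
    finally have "u $ k / sqrt (real (eta l q m n A As k)) = v $ k / sqrt (real (eta l q m n A As k))" .
    then show "u $ k = v $ k" using eta_pos[OF k] by simp
  qed (use u v in simp)
qed

lemma vecE_matE:
  assumes "v \<in> carrier_vec (length As)"
  shows "vecE l q m n A As (matE l q m n A As v) = v"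
  unfolding vecE_def using assms inj_on_matE by (auto intro!: the_equality dest: inj_onD)

lemma matE_col_A2:
  assumes "\<alpha> < m" "\<beta> < n"
  shows "matE l q m n A As (col (A2 l q m n A As) (\<beta> * m + \<alpha>)) = Bblk l q (Bmat l q m n A) \<alpha> \<beta>"
proof (rule eq_matI)
  fix \<gamma> \<delta> assume "\<gamma> < dim_row (Bblk l q (Bmat l q m n A) \<alpha> \<beta>)"
    "\<delta> < dim_col (Bblk l q (Bmat l q m n A) \<alpha> \<beta>)"
  then have \<gamma>\<delta>: "\<gamma> < l" "\<delta> < q" by (simp_all add: Bblk_def)
  show "matE l q m n A As (col (A2 l q m n A As) (\<beta> * m + \<alpha>)) $$ (\<gamma>, \<delta>)
      = Bblk l q (Bmat l q m n A) \<alpha> \<beta> $$ (\<gamma>, \<delta>)"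
  proof (cases "blk m n A \<gamma> \<delta> \<in> set As")
    case True
    then obtain k where k: "k < length As" "blk m n A \<gamma> \<delta> = As ! k"
      by (auto simp: in_set_conv_nth)
    then show ?thesis
      using eta_pos[OF k(1)] assms \<gamma>\<delta>
      by (simp add: matE_entry col_A2_entry Bblk_Bmat_entry A_carrier)
  next
    case False
    then have "blk m n A \<gamma> \<delta> = 0\<^sub>m m n" using nonzero_blocks \<gamma>\<delta> by blast
    then show ?thesis
      using False assms \<gamma>\<delta> by (simp add: matE_entry_zero Bblk_Bmat_entry A_carrier)
  qed
qed (simp_all add: matE_def Bblk_def)

lemma matE_image_cols_A2:
  "matE l q m n A As ` set (cols (A2 l q m n A As))
    = {Bblk l q (Bmat l q m n A) \<alpha> \<beta> | \<alpha> \<beta>. \<alpha> < m \<and> \<beta> < n}"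
proof -
  have "set (cols (A2 l q m n A As)) = col (A2 l q m n A As) ` {..<m * n}"
    by (simp add: cols_def A2_def lessThan_atLeast0)
  then have "matE l q m n A As ` set (cols (A2 l q m n A As))
      = matE l q m n A As ` col (A2 l q m n A As) ` (\<lambda>(\<alpha>, \<beta>). \<beta> * m + \<alpha>) ` ({..<m} \<times> {..<n})"
    by (simp only: lessThan_mult_eq)
  also have "\<dots> = (\<lambda>(\<alpha>, \<beta>). Bblk l q (Bmat l q m n A) \<alpha> \<beta>) ` ({..<m} \<times> {..<n})"
    unfolding image_image by (rule image_cong) (auto simp: matE_col_A2)
  also have "\<dots> = {Bblk l q (Bmat l q m n A) \<alpha> \<beta> | \<alpha> \<beta>. \<alpha> < m \<and> \<beta> < n}"
    by auto
  finally show ?thesis .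
qed

lemma Bspace_eq_matE_image_colspace:
  "Bspace l q m n A = matE l q m n A As ` colspace (A2 l q m n A As)"
proof -
  interpret V: vec_space "TYPE(real)" "length As" .
  interpret matE: linear_map class_ring "module_vec TYPE(real) (length As)"
      "module_mat TYPE(real) l q" "matE l q m n A As"
    by (rule matE_linear_map)
  have dim: "dim_row (A2 l q m n A As) = length As" by (simp add: A2_def)
  have "matE l q m n A As ` colspace (A2 l q m n A As)
      = matE l q m n A As ` V.span (set (cols (A2 l q m n A As)))"
    unfolding colspace_def dim V.col_space_def ..
  also have "\<dots> = mspan l q (matE l q m n A As ` set (cols (A2 l q m n A As)))"
    unfolding mspan_def by (rule matE.image_span) (metis cols_dim dim V.cV)
  also have "\<dots> = Bspace l q m n A"
    unfolding matE_image_cols_A2 Bspace_def ..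
  finally show ?thesis ..
qed

end

theorem lemma2:
  fixes l q m n :: nat and A :: "real mat" and As :: "real mat list"
  assumes "A \<in> carrier_mat (l*m) (q*n)"
    and "distinct As"
    and "\<forall>k < length As. As ! k \<in> carrier_mat m n \<and> As ! k \<noteq> 0\<^sub>m m n"
    and "{blk m n A \<gamma> \<delta> | \<gamma> \<delta>. \<gamma> < l \<and> \<delta> < q} - {0\<^sub>m m n} = set As"
  shows "(Bspace l q m n A \<subseteq> mspan l q (Emat l q m n A As ` {..<length As})) \<and>
         linear_map class_ring
           ((module_mat TYPE(real) l q)\<lparr>carrier := Bspace l q m n A\<rparr>)
           ((module_vec TYPE(real) (length As))\<lparr>carrier := colspace (A2 l q m n A As)\<rparr>)
           (vecE l q m n A As) \<and>
         bij_betw (vecE l q m n A As) (Bspace l q m n A) (colspace (A2 l q m n A As)) \<and>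
         (\<forall>X \<in> Bspace l q m n A. matE l q m n A As (vecE l q m n A As X) = X) \<and>
         (\<forall>v \<in> colspace (A2 l q m n A As). vecE l q m n A As (matE l q m n A As v) = v) \<and>
         (\<forall>v \<in> colspace (A2 l q m n A As). matE l q m n A As v \<in> Bspace l q m n A)"
proof -
  interpret block_matrix l q m n A As using assms(1,2,4) by unfold_locales
  interpret matE: linear_map class_ring "module_vec TYPE(real) (length As)"
      "module_mat TYPE(real) l q" "matE l q m n A As"
    by (rule matE_linear_map)
  have colspace: "subspace class_ring (colspace (A2 l q m n A As)) (module_vec TYPE(real) (length As))"
    using colspace_subspace[of "A2 l q m n A As"] by (simp add: A2_def)
  then have colspace_carrier: "colspace (A2 l q m n A As) \<subseteq> carrier_vec (length As)"
    by (simp add: subspace_def submodule_def module_vec_simps)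
  note Bspace = Bspace_eq_matE_image_colspace
  have inverse: "\<forall>v \<in> colspace (A2 l q m n A As). vecE l q m n A As (matE l q m n A As v) = v"
    using colspace_carrier vecE_matE by blast
  have "Bspace l q m n A \<subseteq> mspan l q (Emat l q m n A As ` {..<length As})"
    using colspace_carrier unfolding Bspace matE_image_carrier_vec[symmetric] by blast
  moreover have "linear_map class_ring
      ((module_mat TYPE(real) l q)\<lparr>carrier := Bspace l q m n A\<rparr>)
      ((module_vec TYPE(real) (length As))\<lparr>carrier := colspace (A2 l q m n A As)\<rparr>)
      (vecE l q m n A As)"
    unfolding Bspace by (rule matE.left_inverse_linear_map[OF _ colspace])
      (simp add: module_vec_simps vecE_matE)
  moreover have "bij_betw (vecE l q m n A As) (Bspace l q m n A) (colspace (A2 l q m n A As))"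
    unfolding Bspace using inverse by (intro bij_betw_byWitness[where f' = "matE l q m n A As"]) auto
  ultimately show ?thesis using inverse unfolding Bspace by auto
qed

end
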